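(* Let $n\ge3$ and let $R,V_1,\ldots,V_{n-1}\in H^1(K_n;\mathbb{Z}_2)$ be classes giving an algebra isomorphism $H^*(K_n;\mathbb{Z}_2)\cong\mathbb{Z}_2[R,V_1,\ldots,V_{n-1}]/(R^2,V_i^2+RV_i)$. For $x\in H^1(K_n;\mathbb{Z}_2)$ write $\overline{x}=x\otimes1+1\otimes x\in H^1(K_n\times K_n;\mathbb{Z}_2)$. Then in $H^*(K_n\times K_n;\mathbb{Z}_2)$, $$\overline{V}_1^{\,3}\,\overline{V}_2^{\,2}\,\overline{V}_3\cdots\overline{V}_{n-1}\ne0,$$ but every product of at least $n+3$ factors, each of the form $\overline{V}_i$ or $\overline{R}$, is $0$.
   Context: $K_n=(S^1)^n/\bigl((z_1,\ldots,z_{n-1},z_n)\sim(\overline{z}_1,\ldots,\overline{z}_{n-1},-z_n)\bigr)$, where $S^1\subset\mathbb{C}$ is the unit circle and $\overline{z}$ is complex conjugation. $H^*(K_n\times K_n;\mathbb{Z}_2)$ is identified with $H^*(K_n;\mathbb{Z}_2)\otimes H^*(K_n;\mathbb{Z}_2)$ via the Künneth isomorphism. *)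

theory Defs
  imports Main
begin

text \<open>Concrete model of H^*(K_n;Z_2) = Z_2[R,V_1,...,V_{n-1}]/(R^2, V_i^2 + R V_i).
  A Z_2-basis is given by the monomials R^a V_S with a in {0,1} and S a subset of {1..n-1};
  a basis monomial is encoded as the pair (a, S).  Since V_i^2 = R V_i (char 2) and R^2 = 0,
  R^a V_S * R^b V_T = R^(a + b + |S \<inter> T|) V_(S \<union> T), which is 0 if the R-exponent is at least 2.
  An element of a Z_2-algebra with basis 'b is a finite set of basis elements
  (its support; addition is symmetric difference).\<close>

type_synonym mono = "nat \<times> nat set"

definition mono_mult :: "mono \<Rightarrow> mono \<Rightarrow> mono option" where
  "mono_mult p q =
     (let e = fst p + fst q + card (snd p \<inter> snd q)
      in if e \<ge> 2 then None else Some (e, snd p \<union> snd q))"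

definition alg_mult :: "('b \<Rightarrow> 'b \<Rightarrow> 'b option) \<Rightarrow> 'b set \<Rightarrow> 'b set \<Rightarrow> 'b set" where
  "alg_mult mul x y =
     {m. odd (card {(p, q). p \<in> x \<and> q \<in> y \<and> mul p q = Some m})}"

text \<open>Basis multiplication of the tensor product A \<otimes> A (char 2, so no Koszul signs).\<close>
definition tensor_mult :: "('b \<Rightarrow> 'b \<Rightarrow> 'b option) \<Rightarrow> ('b \<times> 'b) \<Rightarrow> ('b \<times> 'b) \<Rightarrow> ('b \<times> 'b) option" where
  "tensor_mult mul p q =
     (case (mul (fst p) (fst q), mul (snd p) (snd q)) of
        (Some a, Some b) \<Rightarrow> Some (a, b)
      | _ \<Rightarrow> None)"

text \<open>H^*(K_n \<times> K_n;Z_2) \<cong> H^*(K_n) \<otimes> H^*(K_n) (Kuenneth), elements as finite sets of basis pairs.\<close>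
type_synonym elt2 = "(mono \<times> mono) set"

definition KK_mult :: "elt2 \<Rightarrow> elt2 \<Rightarrow> elt2" where
  "KK_mult = alg_mult (tensor_mult mono_mult)"

definition KK_one :: elt2 where
  "KK_one = {((0, {}), (0, {}))}"

definition bar :: "mono \<Rightarrow> elt2" where
  "bar m = {(m, (0, {})), ((0, {}), m)}"

definition Rbar :: elt2 where
  "Rbar = bar (1, {})"

definition Vbar :: "nat \<Rightarrow> elt2" where
  "Vbar i = bar (0, {i})"

definition KK_prod :: "elt2 list \<Rightarrow> elt2" where
  "KK_prod xs = foldr KK_mult xs KK_one"

end

theory Submission
  imports Defs "HOL-Library.Z2" "HOL-Library.Multiset"
begin

(*
  In characteristic 2 squaring is additive, so \bar V_i^2 = \bar{R V_i}, while \bar R^2 = 0 and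
  \bar{R V_i}^2 = 0. Multiplying out a few more small monomials shows that \bar R^2, \bar V_i^4,
  \bar V_i^3 \bar V_j^3, \bar R \bar V_i^3, \bar R \bar V_i^2 \bar V_j^2 and
  \bar V_i^2 \bar V_j^2 \bar V_k^2 (distinct indices) all vanish. A product avoiding all of them
  has at most one factor \bar R, each \bar V_i at most three times, at most one index three
  times and at most two indices at least twice, hence at most n + 2 factors; as the algebra is
  commutative, every longer product contains a vanishing sub-product.

  For the nonvanishing product, \bar V_1^3 \bar V_2^2 = R V_1 \<otimes> R V_1 V_2 + R V_1 V_2 \<otimes> R V_1
  and \bar V_3 ... \bar V_{n-1} is the sum of V_A \<otimes> V_{S-A} over all subsets A of
  S = {3, ..., n-1}. The basis element R V_1 V_S \<otimes> R V_1 V_2 of their product arises from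
  exactly one pair of basis elements, so its coefficient is 1.
*)

section \<open>Algebras over Z_2 given by a partial multiplication of basis elements\<close>

definition alg_coeff :: "('b \<Rightarrow> 'b \<Rightarrow> 'b option) \<Rightarrow> 'b set \<Rightarrow> 'b set \<Rightarrow> 'b \<Rightarrow> bit" where
  "alg_coeff mul x y m = (\<Sum>p\<in>x. \<Sum>q\<in>y. of_bool (mul p q = Some m))"

definition basis_products :: "('b \<Rightarrow> 'b \<Rightarrow> 'b option) \<Rightarrow> 'b set \<Rightarrow> 'b set \<Rightarrow> 'b set" where
  "basis_products mul x y = {m. \<exists>p\<in>x. \<exists>q\<in>y. mul p q = Some m}"

lemma of_nat_eq_1_bit_iff: "(of_nat k :: bit) = 1 \<longleftrightarrow> odd k"
  by (induction k) auto

lemma mem_alg_mult_iff: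
  assumes "finite x" "finite y"
  shows "m \<in> alg_mult mul x y \<longleftrightarrow> alg_coeff mul x y m = 1"
proof -
  have "{(p, q). p \<in> x \<and> q \<in> y \<and> mul p q = Some m}
      = (x \<times> y) \<inter> {pq. mul (fst pq) (snd pq) = Some m}"
    by auto
  moreover have "alg_coeff mul x y m = (\<Sum>pq\<in>x \<times> y. of_bool (mul (fst pq) (snd pq) = Some m))"
    unfolding alg_coeff_def sum.cartesian_product by (simp add: case_prod_beta)
  ultimately show ?thesis
    using assms by (simp add: alg_mult_def of_nat_eq_1_bit_iff)
qed

lemma alg_mult_subset_basis_products: "alg_mult mul x y \<subseteq> basis_products mul x y"
proof
  fix m assume "m \<in> alg_mult mul x y"
  then have "odd (card {(p, q). p \<in> x \<and> q \<in> y \<and> mul p q = Some m})"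
    unfolding alg_mult_def by simp
  then have "{(p, q). p \<in> x \<and> q \<in> y \<and> mul p q = Some m} \<noteq> {}"
    by (rule odd_card_imp_not_empty)
  then show "m \<in> basis_products mul x y"
    unfolding basis_products_def by blast
qed

lemma finite_basis_products:
  assumes "finite x" "finite y"
  shows "finite (basis_products mul x y)"
proof -
  have "basis_products mul x y \<subseteq> (\<lambda>(p, q). the (mul p q)) ` (x \<times> y)"
    unfolding basis_products_def by force
  with assms show ?thesis
    by (meson finite_SigmaI finite_imageI finite_subset)
qed

lemma finite_alg_mult: "finite x \<Longrightarrow> finite y \<Longrightarrow> finite (alg_mult mul x y)"
  by (meson alg_mult_subset_basis_products finite_basis_products finite_subset)

lemma alg_coeff_eq_of_bool:
  assumes "finite x" "finite y"
  shows "alg_coeff mul x y m = of_bool (m \<in> alg_mult mul x y)"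
  using mem_alg_mult_iff[OF assms, of m mul] by (cases "alg_coeff mul x y m") auto

lemma sum_alg_mult:
  assumes "finite x" "finite y"
  shows "(\<Sum>a\<in>alg_mult mul x y. g a) = (\<Sum>a\<in>basis_products mul x y. alg_coeff mul x y a * g a)"
proof -
  have "(\<Sum>a\<in>basis_products mul x y. alg_coeff mul x y a * g a)
      = (\<Sum>a\<in>basis_products mul x y. if a \<in> alg_mult mul x y then g a else 0)"
    using assms by (intro sum.cong) (simp_all add: alg_coeff_eq_of_bool)
  also have "\<dots> = sum g (basis_products mul x y \<inter> alg_mult mul x y)"
    using assms by (simp add: sum.inter_restrict finite_basis_products)
  also have "basis_products mul x y \<inter> alg_mult mul x y = alg_mult mul x y"
    using alg_mult_subset_basis_products[of mul x y] by blast
  finally show ?thesis ..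
qed

lemma sum_basis_products_collapse:
  fixes f :: "'b \<Rightarrow> bit"
  assumes "p \<in> x" "q \<in> y" "finite x" "finite y"
  shows "(\<Sum>a\<in>basis_products mul x y. of_bool (mul p q = Some a) * f a)
       = (case mul p q of None \<Rightarrow> 0 | Some a \<Rightarrow> f a)"
proof (cases "mul p q")
  case (Some a)
  then have "a \<in> basis_products mul x y"
    using assms unfolding basis_products_def by auto
  moreover have "(\<Sum>b\<in>basis_products mul x y. of_bool (mul p q = Some b) * f b)
      = (\<Sum>b\<in>basis_products mul x y. if b = a then f b else 0)"
    using Some by (intro sum.cong) auto
  ultimately show ?thesis
    using Some finite_basis_products[OF assms(3,4)] by simp
qed simp

lemma alg_coeff_mult_left:
  assumes "finite x" "finite y" "finite z"
  shows "alg_coeff mul (alg_mult mul x y) z m =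
    (\<Sum>p\<in>x. \<Sum>q\<in>y. \<Sum>r\<in>z. of_bool (Option.bind (mul p q) (\<lambda>a. mul a r) = Some m))"
proof -
  have "alg_coeff mul (alg_mult mul x y) z m = (\<Sum>a\<in>basis_products mul x y.
      alg_coeff mul x y a * (\<Sum>r\<in>z. of_bool (mul a r = Some m)))"
    unfolding alg_coeff_def[of mul "alg_mult mul x y"] by (rule sum_alg_mult[OF assms(1,2)])
  also have "\<dots> = (\<Sum>p\<in>x. \<Sum>q\<in>y. \<Sum>r\<in>z. \<Sum>a\<in>basis_products mul x y.
      of_bool (mul p q = Some a) * of_bool (mul a r = Some m))"
    unfolding alg_coeff_def sum_distrib_right
    by (simp only: sum_distrib_left sum.swap[where A = "basis_products mul x y"])
  also have "\<dots> = (\<Sum>p\<in>x. \<Sum>q\<in>y. \<Sum>r\<in>z. of_bool (Option.bind (mul p q) (\<lambda>a. mul a r) = Some m))"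
    using assms by (intro sum.cong refl, subst sum_basis_products_collapse) (auto split: option.split)
  finally show ?thesis .
qed

lemma alg_coeff_mult_right:
  assumes "finite x" "finite y" "finite z"
  shows "alg_coeff mul x (alg_mult mul y z) m =
    (\<Sum>p\<in>x. \<Sum>q\<in>y. \<Sum>r\<in>z. of_bool (Option.bind (mul q r) (mul p) = Some m))"
proof -
  have "alg_coeff mul x (alg_mult mul y z) m = (\<Sum>p\<in>x. \<Sum>b\<in>basis_products mul y z.
      alg_coeff mul y z b * of_bool (mul p b = Some m))"
    unfolding alg_coeff_def[of mul x] using sum_alg_mult[OF assms(2,3)] by simp
  also have "\<dots> = (\<Sum>p\<in>x. \<Sum>q\<in>y. \<Sum>r\<in>z. \<Sum>b\<in>basis_products mul y z.
      of_bool (mul q r = Some b) * of_bool (mul p b = Some m))"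
    unfolding alg_coeff_def sum_distrib_right
    by (simp only: sum.swap[where A = "basis_products mul y z"])
  also have "\<dots> = (\<Sum>p\<in>x. \<Sum>q\<in>y. \<Sum>r\<in>z. of_bool (Option.bind (mul q r) (mul p) = Some m))"
    using assms by (intro sum.cong refl, subst sum_basis_products_collapse) (auto split: option.split)
  finally show ?thesis .
qed

lemma alg_mult_assoc:
  assumes "finite x" "finite y" "finite z"
    and "\<And>p q r. p \<in> x \<Longrightarrow> q \<in> y \<Longrightarrow> r \<in> z \<Longrightarrow>
       Option.bind (mul p q) (\<lambda>a. mul a r) = Option.bind (mul q r) (mul p)"
  shows "alg_mult mul (alg_mult mul x y) z = alg_mult mul x (alg_mult mul y z)"
proof (rule set_eqI)
  fix m
  have "alg_coeff mul (alg_mult mul x y) z m = alg_coeff mul x (alg_mult mul y z) m"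
    unfolding alg_coeff_mult_left[OF assms(1-3)] alg_coeff_mult_right[OF assms(1-3)]
    using assms(4) by (intro sum.cong refl) simp
  then show "m \<in> alg_mult mul (alg_mult mul x y) z \<longleftrightarrow> m \<in> alg_mult mul x (alg_mult mul y z)"
    using assms(1-3) by (simp add: mem_alg_mult_iff finite_alg_mult)
qed

lemma alg_mult_swap: "alg_mult mul x y = alg_mult (\<lambda>p q. mul q p) y x"
proof -
  have "{(p, q). p \<in> x \<and> q \<in> y \<and> mul p q = Some m}
      = prod.swap ` {(q, p). q \<in> y \<and> p \<in> x \<and> mul p q = Some m}" for m
    by (auto simp: image_iff)
  then show ?thesis
    unfolding alg_mult_def by (simp add: card_image)
qed

lemma alg_mult_commute:
  assumes "\<And>p q. mul p q = mul q p"
  shows "alg_mult mul x y = alg_mult mul y x"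
proof -
  have "(\<lambda>p q. mul q p) = mul"
    using assms by (intro ext) simp
  then show ?thesis
    using alg_mult_swap[of mul x y] by simp
qed

lemma alg_mult_singleton: "alg_mult mul {p} {q} = set_option (mul p q)"
  by (auto simp: mem_alg_mult_iff alg_coeff_def simp del: sum_of_bool_eq)

lemma alg_mult_insert_left:
  assumes "a \<notin> x" "finite x" "finite y"
  shows "alg_mult mul (insert a x) y = sym_diff (alg_mult mul {a} y) (alg_mult mul x y)"
proof -
  have "alg_coeff mul (insert a x) y m = alg_coeff mul {a} y m + alg_coeff mul x y m" for m
    using assms unfolding alg_coeff_def by simp
  then show ?thesis
    using assms by (auto simp: mem_alg_mult_iff add_bit_eq_xor)
qed

lemma alg_mult_insert_right:
  assumes "a \<notin> y" "finite x" "finite y"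
  shows "alg_mult mul x (insert a y) = sym_diff (alg_mult mul x {a}) (alg_mult mul x y)"
proof -
  have "alg_mult mul x (insert a y) = alg_mult (\<lambda>p q. mul q p) (insert a y) x"
    by (rule alg_mult_swap)
  also have "\<dots> = sym_diff (alg_mult (\<lambda>p q. mul q p) {a} x) (alg_mult (\<lambda>p q. mul q p) y x)"
    by (rule alg_mult_insert_left[OF assms(1,3,2)])
  finally show ?thesis
    by (simp only: alg_mult_swap[of mul x])
qed

lemma mem_alg_mult_unique_factorization:
  assumes "p \<in> x" "q \<in> y" "mul p q = Some m"
    and "\<And>p' q'. p' \<in> x \<Longrightarrow> q' \<in> y \<Longrightarrow> mul p' q' = Some m \<Longrightarrow> p' = p \<and> q' = q"
  shows "m \<in> alg_mult mul x y"
proof -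
  have "{(p', q'). p' \<in> x \<and> q' \<in> y \<and> mul p' q' = Some m} = {(p, q)}"
    using assms by blast
  then show ?thesis
    unfolding alg_mult_def by simp
qed

lemma alg_mult_eq_basis_products:
  assumes "\<And>p q p' q' m. p \<in> x \<Longrightarrow> q \<in> y \<Longrightarrow> p' \<in> x \<Longrightarrow> q' \<in> y \<Longrightarrow>
      mul p q = Some m \<Longrightarrow> mul p' q' = Some m \<Longrightarrow> p' = p \<and> q' = q"
  shows "alg_mult mul x y = basis_products mul x y"
proof
  show "basis_products mul x y \<subseteq> alg_mult mul x y"
  proof
    fix m assume "m \<in> basis_products mul x y"
    then obtain p q where "p \<in> x" "q \<in> y" "mul p q = Some m"
      unfolding basis_products_def by blast
    then show "m \<in> alg_mult mul x y"
      using assms by (intro mem_alg_mult_unique_factorization) blast+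
  qed
qed (rule alg_mult_subset_basis_products)

section \<open>The algebra H^*(K_n \<times> K_n; Z_2)\<close>

text \<open>
  \<open>mono_mult\<close> is associative only on monomials with finite index sets (it counts them
  with \<open>card\<close>), and \<open>(0, {})\<close> is a unit only for monomials with \<open>R\<close>-exponent at most 1;
  \<open>KK_wf\<close> restricts to such elements.
\<close>

definition mono_wf :: "mono \<Rightarrow> bool" where
  "mono_wf m \<longleftrightarrow> fst m \<le> 1 \<and> finite (snd m)"

definition KK_wf :: "elt2 \<Rightarrow> bool" where
  "KK_wf x \<longleftrightarrow> finite x \<and> (\<forall>p\<in>x. mono_wf (fst p) \<and> mono_wf (snd p))"

lemma mono_mult_commute: "mono_mult p q = mono_mult q p"
  unfolding mono_mult_def Let_def by (simp add: add.commute Int_commute Un_commute)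

lemma mono_wf_mult: "mono_wf p \<Longrightarrow> mono_wf q \<Longrightarrow> mono_mult p q = Some m \<Longrightarrow> mono_wf m"
  unfolding mono_mult_def mono_wf_def Let_def by (auto split: if_splits)

lemma mono_mult_one_left: "fst p \<le> 1 \<Longrightarrow> mono_mult (0, {}) p = Some p"
  unfolding mono_mult_def by (cases p) simp

lemma card_Int_Un_assoc:
  assumes "finite S" "finite T" "finite U"
  shows "card (S \<inter> T) + card ((S \<union> T) \<inter> U) = card (T \<inter> U) + card (S \<inter> (T \<union> U))"
proof -
  have "card (S \<inter> U) + card (T \<inter> U) = card (S \<inter> U \<union> T \<inter> U) + card (S \<inter> U \<inter> (T \<inter> U))"
    using assms by (intro card_Un_Int) auto
  moreover have "card (S \<inter> T) + card (S \<inter> U) = card (S \<inter> T \<union> S \<inter> U) + card (S \<inter> T \<inter> (S \<inter> U))"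
    using assms by (intro card_Un_Int) auto
  moreover have "S \<inter> U \<union> T \<inter> U = (S \<union> T) \<inter> U" "S \<inter> T \<union> S \<inter> U = S \<inter> (T \<union> U)"
    and "S \<inter> U \<inter> (T \<inter> U) = S \<inter> T \<inter> (S \<inter> U)"
    by blast+
  ultimately show ?thesis by simp
qed

lemma mono_mult_assoc:
  assumes "finite S" "finite T" "finite U"
  shows "Option.bind (mono_mult (a, S) (b, T)) (\<lambda>m. mono_mult m (c, U))
       = Option.bind (mono_mult (b, T) (c, U)) (mono_mult (a, S))"
proof -
  have "card (S \<inter> T) \<le> card (S \<inter> (T \<union> U))" "card (T \<inter> U) \<le> card ((S \<union> T) \<inter> U)"
    using assms by (auto intro: card_mono)
  then show ?thesis
    using card_Int_Un_assoc[OF assms] unfolding mono_mult_def Let_def by (auto simp: Un_assoc)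
qed

lemma tensor_mult_commute:
  "(\<And>p q. mul p q = mul q p) \<Longrightarrow> tensor_mult mul p q = tensor_mult mul q p"
  unfolding tensor_mult_def by simp

lemma tensor_mult_assoc:
  assumes "Option.bind (mul p1 q1) (\<lambda>a. mul a r1) = Option.bind (mul q1 r1) (mul p1)"
    and "Option.bind (mul p2 q2) (\<lambda>a. mul a r2) = Option.bind (mul q2 r2) (mul p2)"
  shows "Option.bind (tensor_mult mul (p1, p2) (q1, q2)) (\<lambda>a. tensor_mult mul a (r1, r2))
       = Option.bind (tensor_mult mul (q1, q2) (r1, r2)) (tensor_mult mul (p1, p2))"
  using assms unfolding tensor_mult_def
  by (cases "mul q1 r1"; cases "mul q2 r2") (auto split: option.splits dest: sym)

lemma tensor_mult_eq_Some_iff: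
  "tensor_mult mul p q = Some (a, b) \<longleftrightarrow> mul (fst p) (fst q) = Some a \<and> mul (snd p) (snd q) = Some b"
  unfolding tensor_mult_def by (auto split: option.splits)

lemma KK_wf_mult:
  assumes "KK_wf x" "KK_wf y"
  shows "KK_wf (KK_mult x y)"
proof -
  have "mono_wf (fst m) \<and> mono_wf (snd m)" if "m \<in> KK_mult x y" for m
  proof -
    from that have "m \<in> basis_products (tensor_mult mono_mult) x y"
      unfolding KK_mult_def by (rule subsetD[OF alg_mult_subset_basis_products])
    then obtain p q where pq: "p \<in> x" "q \<in> y" "tensor_mult mono_mult p q = Some m"
      unfolding basis_products_def by blast
    then have "mono_mult (fst p) (fst q) = Some (fst m)" "mono_mult (snd p) (snd q) = Some (snd m)"
      using tensor_mult_eq_Some_iff[of mono_mult p q "fst m" "snd m"] by simp_all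
    moreover have "mono_wf (fst p)" "mono_wf (snd p)" "mono_wf (fst q)" "mono_wf (snd q)"
      using assms pq(1,2) unfolding KK_wf_def by simp_all
    ultimately show ?thesis
      by (blast intro: mono_wf_mult)
  qed
  moreover have "finite (KK_mult x y)"
    using assms unfolding KK_wf_def KK_mult_def by (simp add: finite_alg_mult)
  ultimately show ?thesis
    unfolding KK_wf_def by blast
qed

lemma KK_mult_commute: "KK_mult x y = KK_mult y x"
  unfolding KK_mult_def by (intro alg_mult_commute tensor_mult_commute mono_mult_commute)

lemma KK_mult_assoc:
  assumes "KK_wf x" "KK_wf y" "KK_wf z"
  shows "KK_mult (KK_mult x y) z = KK_mult x (KK_mult y z)"
  unfolding KK_mult_def
proof (rule alg_mult_assoc)
  fix p q r assume pqr: "p \<in> x" "q \<in> y" "r \<in> z"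
  obtain a1 S1 a2 S2 b1 T1 b2 T2 c1 U1 c2 U2 where
    pqr_eq: "p = ((a1, S1), (a2, S2))" "q = ((b1, T1), (b2, T2))" "r = ((c1, U1), (c2, U2))"
    by (metis prod.exhaust)
  have "finite S1" "finite S2" "finite T1" "finite T2" "finite U1" "finite U2"
    using assms pqr unfolding pqr_eq KK_wf_def mono_wf_def by auto
  then show "Option.bind (tensor_mult mono_mult p q) (\<lambda>a. tensor_mult mono_mult a r)
      = Option.bind (tensor_mult mono_mult q r) (tensor_mult mono_mult p)"
    unfolding pqr_eq by (intro tensor_mult_assoc mono_mult_assoc)
qed (use assms in \<open>simp_all add: KK_wf_def\<close>)

lemma KK_mult_one_left:
  assumes "KK_wf x"
  shows "KK_mult KK_one x = x"
proof -
  have "tensor_mult mono_mult ((0, {}), (0, {})) q = Some q" if "q \<in> x" for q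
    using assms that unfolding KK_wf_def mono_wf_def tensor_mult_def
    by (auto simp: mono_mult_one_left)
  then have "alg_mult (tensor_mult mono_mult) KK_one x = basis_products (tensor_mult mono_mult) KK_one x"
    by (intro alg_mult_eq_basis_products) (auto simp: KK_one_def)
  also have "\<dots> = x"
    using \<open>\<And>q. q \<in> x \<Longrightarrow> _\<close> by (auto simp: KK_one_def basis_products_def)
  finally show ?thesis
    unfolding KK_mult_def .
qed

lemma KK_mult_one_right: "KK_wf x \<Longrightarrow> KK_mult x KK_one = x"
  using KK_mult_commute KK_mult_one_left by metis

lemma KK_wf_one: "KK_wf KK_one"
  unfolding KK_wf_def KK_one_def mono_wf_def by simp

lemma KK_wf_bar: "mono_wf m \<Longrightarrow> KK_wf (bar m)"
  unfolding KK_wf_def bar_def mono_wf_def by auto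

lemma KK_wf_Vbar: "KK_wf (Vbar i)"
  and KK_wf_Rbar: "KK_wf Rbar"
  unfolding Vbar_def Rbar_def by (simp_all add: KK_wf_bar mono_wf_def)

lemma Vbar_eq_iff [simp]: "Vbar i = Vbar j \<longleftrightarrow> i = j"
  unfolding Vbar_def bar_def by (auto simp: doubleton_eq_iff)

lemma Rbar_ne_Vbar [simp]: "Rbar \<noteq> Vbar i" "Vbar i \<noteq> Rbar"
  unfolding Rbar_def Vbar_def bar_def by (auto simp: doubleton_eq_iff)

lemma KK_mult_empty_left [simp]: "KK_mult {} y = {}"
  unfolding KK_mult_def alg_mult_def by simp

lemma KK_prod_Nil [simp]: "KK_prod [] = KK_one"
  and KK_prod_Cons [simp]: "KK_prod (x # xs) = KK_mult x (KK_prod xs)"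
  unfolding KK_prod_def by simp_all

lemma KK_wf_prod: "\<forall>x\<in>set xs. KK_wf x \<Longrightarrow> KK_wf (KK_prod xs)"
  by (induction xs) (simp_all add: KK_wf_one KK_wf_mult)

lemma KK_prod_append:
  assumes "\<forall>x\<in>set xs. KK_wf x" "\<forall>y\<in>set ys. KK_wf y"
  shows "KK_prod (xs @ ys) = KK_mult (KK_prod xs) (KK_prod ys)"
  using assms(1)
proof (induction xs)
  case Nil
  then show ?case using KK_mult_one_left KK_wf_prod assms(2) by simp
next
  case (Cons x xs)
  then show ?case using KK_mult_assoc KK_wf_prod assms(2) by simp
qed

lemma KK_prod_mset_eq:
  assumes "mset xs = mset ys" "\<forall>x\<in>set xs. KK_wf x"
  shows "KK_prod xs = KK_prod ys"
proof -
  have "fold KK_mult (rev xs) KK_one = fold KK_mult (rev ys) KK_one"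
  proof (rule fold_permuted_eq[where P = KK_wf])
    show "mset (rev xs) = mset (rev ys)" "KK_wf KK_one"
      using assms(1) KK_wf_one by simp_all
    show "KK_wf (KK_mult x z)" if "x \<in> set (rev xs)" "KK_wf z" for x z
      using that assms(2) by (simp add: KK_wf_mult)
    show "KK_mult x (KK_mult y z) = KK_mult y (KK_mult x z)"
      if "x \<in> set (rev xs)" "y \<in> set (rev xs)" "KK_wf z" for x y z
      using that assms(2) KK_mult_assoc KK_mult_commute by (metis set_rev)
  qed
  then show ?thesis
    by (simp add: KK_prod_def foldr_conv_fold)
qed

lemma KK_prod_eq_empty_if_subset:
  assumes "mset ys \<subseteq># mset xs" "KK_prod ys = {}" "\<forall>x\<in>set xs. KK_wf x"
  shows "KK_prod xs = {}"
proof -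
  obtain zs where zs: "mset zs = mset xs - mset ys"
    using ex_mset by blast
  then have mset_eq: "mset xs = mset (ys @ zs)"
    using assms(1) by simp
  then have "set xs = set ys \<union> set zs"
    by (metis mset_eq_setD set_append)
  then have "KK_prod xs = KK_mult (KK_prod ys) (KK_prod zs)"
    using KK_prod_mset_eq[OF mset_eq] KK_prod_append assms(3) by simp
  with assms(2) show ?thesis
    by simp
qed

section \<open>Products of the classes Rbar and Vbar i\<close>

definition sym_tensor :: "mono \<Rightarrow> mono \<Rightarrow> elt2" where
  "sym_tensor a b = {(a, b), (b, a)}"

text \<open>
  The pair \<open>(1, {i})\<close> encodes \<open>R V\<^sub>i\<close>, so \<open>bar (1, {i})\<close> is the bar of \<open>R V\<^sub>i\<close>. The insertion rules
  are restricted to sets with at least two elements, since a singleton \<open>{a} = insert a {}\<close>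
  would make them loop.
\<close>

lemmas KK_mult_eval = KK_mult_def alg_mult_singleton
  alg_mult_insert_left[where x = "insert b x'" for b x'] alg_mult_insert_right[where y = "insert b y'" for b y']
  tensor_mult_def mono_mult_def Let_def bar_def Vbar_def Rbar_def sym_tensor_def

lemma Vbar_square: "KK_mult (Vbar i) (Vbar i) = bar (1, {i})"
  by (simp add: KK_mult_eval; auto)

lemma Rbar_square: "KK_mult Rbar Rbar = {}"
  by (simp add: KK_mult_eval; auto)

lemma bar_RV_square: "KK_mult (bar (1, {i})) (bar (1, {i})) = {}"
  by (simp add: KK_mult_eval; auto)

lemma bar_RV_mult_bar_RV: "i \<noteq> j \<Longrightarrow> KK_mult (bar (1, {i})) (bar (1, {j})) = sym_tensor (1, {i}) (1, {j})"
  by (simp add: KK_mult_eval; auto)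

lemma bar_RV_mult_sym_tensor: "i \<noteq> j \<Longrightarrow> KK_mult (bar (1, {k})) (sym_tensor (1, {i}) (1, {j})) = {}"
  by (simp add: KK_mult_eval; auto)

lemma Rbar_mult_bar_RV: "KK_mult Rbar (bar (1, {i})) = sym_tensor (1, {}) (1, {i})"
  by (simp add: KK_mult_eval; auto)

lemma sym_tensor_R_RV_mult_Vbar: "KK_mult (sym_tensor (1, {}) (1, {i})) (Vbar i) = {}"
  by (simp add: KK_mult_eval; auto)

lemma sym_tensor_R_RV_mult_bar_RV: "KK_mult (sym_tensor (1, {}) (1, {i})) (bar (1, {j})) = {}"
  by (simp add: KK_mult_eval; auto)

lemma sym_tensor_mult_Vbar_Vbar:
  "i \<noteq> j \<Longrightarrow> KK_mult (sym_tensor (1, {i}) (1, {j})) (KK_mult (Vbar i) (Vbar j)) = {}"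
  by (simp add: KK_mult_eval; auto)

lemma Vbar_mult_bar_RV: "KK_mult (Vbar i) (bar (1, {i})) = sym_tensor (0, {i}) (1, {i})"
  by (simp add: KK_mult_eval; auto)

lemma sym_tensor_V_RV_mult_bar_RV:
  "i \<noteq> j \<Longrightarrow> KK_mult (sym_tensor (0, {i}) (1, {i})) (bar (1, {j})) = sym_tensor (1, {i}) (1, {i, j})"
  by (simp add: KK_mult_eval; auto)

lemmas KK_wf_simps = KK_wf_mult KK_wf_Vbar KK_wf_Rbar KK_wf_one

lemma KK_prod_Rbar_Rbar: "KK_prod [Rbar, Rbar] = {}"
  by (simp add: KK_mult_one_right KK_wf_Rbar Rbar_square)

lemma KK_prod_Vbar_pow4: "KK_prod [Vbar i, Vbar i, Vbar i, Vbar i] = {}"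
proof -
  have "KK_prod [Vbar i, Vbar i, Vbar i, Vbar i] = KK_mult (KK_mult (Vbar i) (Vbar i)) (KK_mult (Vbar i) (Vbar i))"
    by (simp add: KK_mult_assoc KK_wf_simps KK_mult_one_right)
  also have "\<dots> = {}"
    by (simp only: Vbar_square bar_RV_square)
  finally show ?thesis .
qed

lemma KK_prod_Vbar_cube_Vbar_cube:
  assumes "i \<noteq> j"
  shows "KK_prod [Vbar i, Vbar i, Vbar j, Vbar j, Vbar i, Vbar j] = {}"
proof -
  have "KK_prod [Vbar i, Vbar i, Vbar j, Vbar j, Vbar i, Vbar j]
      = KK_mult (KK_mult (KK_mult (Vbar i) (Vbar i)) (KK_mult (Vbar j) (Vbar j))) (KK_mult (Vbar i) (Vbar j))"
    by (simp add: KK_mult_assoc KK_wf_simps KK_mult_one_right)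
  also have "\<dots> = {}"
    by (simp only: Vbar_square bar_RV_mult_bar_RV[OF assms] sym_tensor_mult_Vbar_Vbar[OF assms])
  finally show ?thesis .
qed

lemma KK_prod_Rbar_Vbar_cube: "KK_prod [Rbar, Vbar i, Vbar i, Vbar i] = {}"
proof -
  have "KK_prod [Rbar, Vbar i, Vbar i, Vbar i] = KK_mult (KK_mult Rbar (KK_mult (Vbar i) (Vbar i))) (Vbar i)"
    by (simp add: KK_mult_assoc KK_wf_simps KK_mult_one_right)
  also have "\<dots> = {}"
    by (simp only: Vbar_square Rbar_mult_bar_RV sym_tensor_R_RV_mult_Vbar)
  finally show ?thesis .
qed

lemma KK_prod_Rbar_Vbar_sq_Vbar_sq: "KK_prod [Rbar, Vbar i, Vbar i, Vbar j, Vbar j] = {}"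
proof -
  have "KK_prod [Rbar, Vbar i, Vbar i, Vbar j, Vbar j]
      = KK_mult (KK_mult Rbar (KK_mult (Vbar i) (Vbar i))) (KK_mult (Vbar j) (Vbar j))"
    by (simp add: KK_mult_assoc KK_wf_simps KK_mult_one_right)
  also have "\<dots> = {}"
    by (simp only: Vbar_square Rbar_mult_bar_RV sym_tensor_R_RV_mult_bar_RV)
  finally show ?thesis .
qed

lemma KK_prod_Vbar_sq_Vbar_sq_Vbar_sq:
  assumes "i \<noteq> j"
  shows "KK_prod [Vbar k, Vbar k, Vbar i, Vbar i, Vbar j, Vbar j] = {}"
proof -
  have "KK_prod [Vbar k, Vbar k, Vbar i, Vbar i, Vbar j, Vbar j]
      = KK_mult (KK_mult (Vbar k) (Vbar k)) (KK_mult (KK_mult (Vbar i) (Vbar i)) (KK_mult (Vbar j) (Vbar j)))"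
    by (simp add: KK_mult_assoc KK_wf_simps KK_mult_one_right)
  also have "\<dots> = {}"
    by (simp only: Vbar_square bar_RV_mult_bar_RV[OF assms] bar_RV_mult_sym_tensor[OF assms])
  finally show ?thesis .
qed

lemma KK_prod_Vbar_cube_Vbar_sq:
  assumes "i \<noteq> j"
  shows "KK_prod [Vbar i, Vbar i, Vbar i, Vbar j, Vbar j] = sym_tensor (1, {i}) (1, {i, j})"
proof -
  have "KK_prod [Vbar i, Vbar i, Vbar i, Vbar j, Vbar j]
      = KK_mult (KK_mult (Vbar i) (KK_mult (Vbar i) (Vbar i))) (KK_mult (Vbar j) (Vbar j))"
    by (simp add: KK_mult_assoc KK_wf_simps KK_mult_one_right)
  also have "\<dots> = sym_tensor (1, {i}) (1, {i, j})"
    by (simp only: Vbar_square Vbar_mult_bar_RV sym_tensor_V_RV_mult_bar_RV[OF assms])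
  finally show ?thesis .
qed

definition Vbar_setprod :: "nat set \<Rightarrow> elt2" where
  "Vbar_setprod S = (\<lambda>A. ((0, A), (0, S - A))) ` Pow S"

lemma Vbar_mult_Vbar_setprod:
  assumes "a \<notin> S"
  shows "KK_mult (Vbar a) (Vbar_setprod S) = Vbar_setprod (insert a S)"
proof -
  define f where "f B = ((0::nat, B), (0::nat, insert a S - B))" for B
  have Vbar_a: "Vbar a = {((0, {a}), (0, {})), ((0, {}), (0, {a}))}"
    unfolding Vbar_def bar_def by auto
  have left: "tensor_mult mono_mult ((0, {a}), (0, {})) ((0, A), (0, S - A)) = Some (f (insert a A))"
    and right: "tensor_mult mono_mult ((0, {}), (0, {a})) ((0, A), (0, S - A)) = Some (f A)"
    if "A \<subseteq> S" for A
  proof -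
    have "{a} \<inter> A = {}" "{a} \<inter> (S - A) = {}" "insert a S - insert a A = S - A" "insert a S - A = insert a (S - A)"
      using that assms by auto
    then show "tensor_mult mono_mult ((0, {a}), (0, {})) ((0, A), (0, S - A)) = Some (f (insert a A))"
      and "tensor_mult mono_mult ((0, {}), (0, {a})) ((0, A), (0, S - A)) = Some (f A)"
      unfolding f_def tensor_mult_def mono_mult_def by simp_all
  qed
  have "KK_mult (Vbar a) (Vbar_setprod S) = basis_products (tensor_mult mono_mult) (Vbar a) (Vbar_setprod S)"
    unfolding KK_mult_def
  proof (rule alg_mult_eq_basis_products)
    fix p q p' q' m
    assume p: "p \<in> Vbar a" and q: "q \<in> Vbar_setprod S"
      and p': "p' \<in> Vbar a" and q': "q' \<in> Vbar_setprod S"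
      and m: "tensor_mult mono_mult p q = Some m" "tensor_mult mono_mult p' q' = Some m"
    obtain A A' where A: "A \<subseteq> S" "q = ((0, A), (0, S - A))" and A': "A' \<subseteq> S" "q' = ((0, A'), (0, S - A'))"
      using q q' unfolding Vbar_setprod_def by blast
    have "a \<notin> A" "a \<notin> A'"
      using A A' assms by auto
    moreover have "f B = f B' \<longleftrightarrow> B = B'" for B B'
      unfolding f_def by auto
    ultimately show "p' = p \<and> q' = q"
      using p p' m left[OF A(1)] right[OF A(1)] left[OF A'(1)] right[OF A'(1)]
      unfolding Vbar_a A(2) A'(2) by (auto simp: insert_ident)
  qed
  also have "\<dots> = f ` insert a ` Pow S \<union> f ` Pow S"
  proof
    show "basis_products (tensor_mult mono_mult) (Vbar a) (Vbar_setprod S) \<subseteq> f ` insert a ` Pow S \<union> f ` Pow S"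
    proof
      fix m assume "m \<in> basis_products (tensor_mult mono_mult) (Vbar a) (Vbar_setprod S)"
      then obtain p A where pA: "p \<in> Vbar a" "A \<subseteq> S" "tensor_mult mono_mult p ((0, A), (0, S - A)) = Some m"
        unfolding basis_products_def Vbar_setprod_def by blast
      then have "m = f (insert a A) \<or> m = f A"
        using left[OF pA(2)] right[OF pA(2)] unfolding Vbar_a by auto
      with pA(2) show "m \<in> f ` insert a ` Pow S \<union> f ` Pow S"
        by blast
    qed
    have "f (insert a B) \<in> basis_products (tensor_mult mono_mult) (Vbar a) (Vbar_setprod S)"
      and "f B \<in> basis_products (tensor_mult mono_mult) (Vbar a) (Vbar_setprod S)" if "B \<subseteq> S" for B
      using left[OF that] right[OF that] that
      unfolding Vbar_a Vbar_setprod_def basis_products_def by blast+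
    then show "f ` insert a ` Pow S \<union> f ` Pow S \<subseteq> basis_products (tensor_mult mono_mult) (Vbar a) (Vbar_setprod S)"
      by auto
  qed
  also have "\<dots> = Vbar_setprod (insert a S)"
    unfolding Vbar_setprod_def f_def Pow_insert by auto
  finally show ?thesis .
qed

lemma KK_prod_map_Vbar: "distinct xs \<Longrightarrow> KK_prod (map Vbar xs) = Vbar_setprod (set xs)"
proof (induction xs)
  case Nil
  show ?case
    by (simp add: Vbar_setprod_def KK_one_def)
next
  case (Cons x xs)
  then show ?case
    by (simp add: Vbar_mult_Vbar_setprod)
qed

lemma mono_mult_Some_snd: "mono_mult p q = Some m \<Longrightarrow> snd m = snd p \<union> snd q"
  unfolding mono_mult_def Let_def by (auto split: if_splits)

lemma sym_tensor_mult_Vbar_setprod_ne_empty: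
  assumes "i \<noteq> j" "i \<notin> S" "j \<notin> S"
  shows "KK_mult (sym_tensor (1, {i}) (1, {i, j})) (Vbar_setprod S) \<noteq> {}"
proof -
  define p :: "mono \<times> mono" where "p = ((1, {i}), (1, {i, j}))"
  define q :: "mono \<times> mono" where "q = ((0, S), (0, {}))"
  define m :: "mono \<times> mono" where "m = ((1, insert i S), (1, {i, j}))"
  have "m \<in> alg_mult (tensor_mult mono_mult) (sym_tensor (1, {i}) (1, {i, j})) (Vbar_setprod S)"
  proof (rule mem_alg_mult_unique_factorization)
    show "p \<in> sym_tensor (1, {i}) (1, {i, j})" "q \<in> Vbar_setprod S"
      unfolding p_def q_def sym_tensor_def Vbar_setprod_def by auto
    have "{i} \<inter> S = {}"
      using assms by auto
    then show "tensor_mult mono_mult p q = Some m"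
      unfolding p_def q_def m_def tensor_mult_def mono_mult_def by simp
    fix p' q'
    assume p': "p' \<in> sym_tensor (1, {i}) (1, {i, j})" and q': "q' \<in> Vbar_setprod S"
      and m': "tensor_mult mono_mult p' q' = Some m"
    obtain A where A: "A \<subseteq> S" "q' = ((0, A), (0, S - A))"
      using q' unfolding Vbar_setprod_def by blast
    have "mono_mult (fst p') (fst q') = Some (fst m)" "mono_mult (snd p') (snd q') = Some (snd m)"
      using m' tensor_mult_eq_Some_iff[of mono_mult p' q' "fst m" "snd m"] by simp_all
    then have supp: "snd (fst m) = snd (fst p') \<union> A" "snd (snd m) = snd (snd p') \<union> (S - A)"
      using A(2) by (simp_all add: mono_mult_Some_snd)
    show "p' = p \<and> q' = q"
    proof (cases "p' = p")
      case True
      with supp(2) have "S - A \<subseteq> {i, j}"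
        unfolding p_def m_def by auto
      with assms(2,3) A have "A = S"
        by blast
      with True A(2) show ?thesis
        unfolding q_def by simp
    next
      case False
      with p' have "p' = ((1, {i, j}), (1, {i}))"
        unfolding p_def sym_tensor_def by auto
      with supp(1) have "j \<in> insert i S"
        unfolding m_def by auto
      with assms show ?thesis
        by simp
    qed
  qed
  then show ?thesis
    unfolding KK_mult_def by blast
qed

lemma KK_prod_witness_ne_empty:
  "KK_prod ([Vbar 1, Vbar 1, Vbar 1, Vbar 2, Vbar 2] @ map Vbar [3..<n]) \<noteq> {}"
proof -
  have "KK_prod ([Vbar 1, Vbar 1, Vbar 1, Vbar 2, Vbar 2] @ map Vbar [3..<n])
      = KK_mult (KK_prod [Vbar 1, Vbar 1, Vbar 1, Vbar 2, Vbar 2]) (KK_prod (map Vbar [3..<n]))"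
    by (rule KK_prod_append) (auto simp: KK_wf_Vbar)
  also have "\<dots> = KK_mult (sym_tensor (1, {1}) (1, {1, 2})) (Vbar_setprod {3..<n})"
    by (simp only: KK_prod_Vbar_cube_Vbar_sq KK_prod_map_Vbar distinct_upt set_upt)
  finally show ?thesis
    using sym_tensor_mult_Vbar_setprod_ne_empty[of 1 2 "{3..<n}"] by simp
qed

lemma multiplicities_sum_le:
  fixes k :: "nat \<Rightarrow> nat" and e :: nat
  assumes "finite S" "e \<le> 1" "\<And>i. i \<in> S \<Longrightarrow> k i \<le> 3"
    and two_cubes: "\<And>i j. i \<in> S \<Longrightarrow> j \<in> S \<Longrightarrow> i \<noteq> j \<Longrightarrow> 3 \<le> k i \<Longrightarrow> 3 \<le> k j \<Longrightarrow> False"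
    and three_squares: "\<And>i j l. i \<in> S \<Longrightarrow> j \<in> S \<Longrightarrow> l \<in> S \<Longrightarrow> i \<noteq> j \<Longrightarrow> j \<noteq> l \<Longrightarrow> i \<noteq> l \<Longrightarrow>
      2 \<le> k i \<Longrightarrow> 2 \<le> k j \<Longrightarrow> 2 \<le> k l \<Longrightarrow> False"
    and R_cube: "\<And>i. i \<in> S \<Longrightarrow> e = 1 \<Longrightarrow> 3 \<le> k i \<Longrightarrow> False"
    and R_two_squares: "\<And>i j. i \<in> S \<Longrightarrow> j \<in> S \<Longrightarrow> i \<noteq> j \<Longrightarrow> e = 1 \<Longrightarrow> 2 \<le> k i \<Longrightarrow> 2 \<le> k j \<Longrightarrow> False"
  shows "e + (\<Sum>i\<in>S. k i) \<le> card S + 3"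
proof -
  define A where "A = {i \<in> S. 2 \<le> k i}"
  define B where "B = {i \<in> S. 3 \<le> k i}"
  have "(\<Sum>i\<in>S. k i) \<le> (\<Sum>i\<in>S. 1 + of_bool (2 \<le> k i) + of_bool (3 \<le> k i))"
    using assms(3) by (intro sum_mono) fastforce
  also have "\<dots> = card S + card A + card B"
    using assms(1) unfolding A_def B_def sum.distrib by (simp add: Int_def)
  finally have sum_le: "(\<Sum>i\<in>S. k i) \<le> card S + card A + card B" .
  have "card B \<le> 1"
    using assms(1) two_cubes unfolding B_def by (auto simp: card_le_Suc0_iff_eq)
  moreover have "card A \<le> 2"
  proof (rule ccontr)
    assume "\<not> card A \<le> 2"
    then obtain T where "T \<subseteq> A" "card T = 3"
      using obtain_subset_with_card_n[of 3 A] by force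
    then obtain i j l where "{i, j, l} \<subseteq> A" "i \<noteq> j" "j \<noteq> l" "i \<noteq> l"
      by (metis card_3_iff)
    with three_squares show False
      unfolding A_def by blast
  qed
  moreover have "B = {}" if "e = 1"
    using that R_cube unfolding B_def by blast
  moreover have "card A \<le> 1" if "e = 1"
    using that R_two_squares assms(1) unfolding A_def by (auto simp: card_le_Suc0_iff_eq)
  ultimately show ?thesis
    using sum_le assms(2) by (cases "e = 1") auto
qed

lemma KK_prod_eq_empty_if_long:
  assumes "finite S" "\<forall>f\<in>set fs. f = Rbar \<or> f \<in> Vbar ` S" "card S + 3 < length fs"
  shows "KK_prod fs = {}"
proof (rule ccontr)
  assume nonzero: "KK_prod fs \<noteq> {}"
  have wf: "\<forall>f\<in>set fs. KK_wf f"
    using assms(2) by (auto simp: KK_wf_Rbar KK_wf_Vbar)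
  have forbidden: "\<exists>a\<in>set gs. count_list fs a < count_list gs a" if "KK_prod gs = {}" for gs
  proof (rule ccontr)
    assume "\<not> ?thesis"
    then have "mset gs \<subseteq># mset fs"
      by (intro mset_subset_eqI) (metis count_list_0_iff count_mset le0 not_le)
    with KK_prod_eq_empty_if_subset[OF _ that wf] nonzero show False
      by blast
  qed
  define k where "k i = count_list fs (Vbar i)" for i
  define e where "e = count_list fs Rbar"
  have "e + (\<Sum>i\<in>S. k i) \<le> card S + 3"
  proof (rule multiplicities_sum_le[OF assms(1)])
    show "e \<le> 1"
      using forbidden[OF KK_prod_Rbar_Rbar] unfolding e_def by auto
    show "k i \<le> 3" for i
      using forbidden[OF KK_prod_Vbar_pow4[of i]] unfolding k_def by auto
    show False if "i \<noteq> j" "3 \<le> k i" "3 \<le> k j" for i j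
      using forbidden[OF KK_prod_Vbar_cube_Vbar_cube[OF \<open>i \<noteq> j\<close>]] that unfolding k_def by auto
    show False if "i \<noteq> j" "j \<noteq> l" "i \<noteq> l" "2 \<le> k i" "2 \<le> k j" "2 \<le> k l" for i j l
      using forbidden[OF KK_prod_Vbar_sq_Vbar_sq_Vbar_sq[OF \<open>j \<noteq> l\<close>, of i]] that unfolding k_def by auto
    show False if "e = 1" "3 \<le> k i" for i
      using forbidden[OF KK_prod_Rbar_Vbar_cube[of i]] that unfolding k_def e_def by auto
    show False if "i \<noteq> j" "e = 1" "2 \<le> k i" "2 \<le> k j" for i j
      using forbidden[OF KK_prod_Rbar_Vbar_sq_Vbar_sq[of i j]] that unfolding k_def e_def by auto
  qed
  moreover have "length fs = e + (\<Sum>i\<in>S. k i)"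
  proof -
    have "length fs = (\<Sum>f\<in>insert Rbar (Vbar ` S). count_list fs f)"
      using assms(1,2) by (intro sum_count_set[symmetric]) auto
    also have "\<dots> = e + (\<Sum>f\<in>Vbar ` S. count_list fs f)"
      using assms(1) unfolding e_def by (subst sum.insert) auto
    also have "(\<Sum>f\<in>Vbar ` S. count_list fs f) = (\<Sum>i\<in>S. k i)"
      unfolding k_def by (simp add: sum.reindex inj_on_def)
    finally show ?thesis .
  qed
  ultimately show False
    using assms(3) by simp
qed

theorem mainTheorem17:
  fixes n :: nat
  assumes "n \<ge> 3"
  shows "KK_prod ([Vbar 1, Vbar 1, Vbar 1, Vbar 2, Vbar 2] @ map Vbar [3..<n]) \<noteq> {}
       \<and> (\<forall>fs. length fs \<ge> n + 3 \<longrightarrow>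
              (\<forall>f \<in> set fs. f = Rbar \<or> (\<exists>i. 1 \<le> i \<and> i \<le> n - 1 \<and> f = Vbar i)) \<longrightarrow>
              KK_prod fs = {})"
proof (intro conjI allI impI)
  show "KK_prod ([Vbar 1, Vbar 1, Vbar 1, Vbar 2, Vbar 2] @ map Vbar [3..<n]) \<noteq> {}"
    by (rule KK_prod_witness_ne_empty)
  fix fs :: "elt2 list"
  assume "length fs \<ge> n + 3" and factors: "\<forall>f \<in> set fs. f = Rbar \<or> (\<exists>i. 1 \<le> i \<and> i \<le> n - 1 \<and> f = Vbar i)"
  from factors have "\<forall>f \<in> set fs. f = Rbar \<or> f \<in> Vbar ` {1..n - 1}"
    by auto
  moreover have "card {1..n - 1} + 3 < length fs"
    using \<open>length fs \<ge> n + 3\<close> assms by simp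
  ultimately show "KK_prod fs = {}"
    by (rule KK_prod_eq_empty_if_long[OF finite_atLeastAtMost])
qed

end
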